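(* For every integer $m \geq 0$ and every real $\eta > -1$, $$ \pi = \frac{4^{m+1}}{\binom{2m}{m}(2m+1)}\cdot \frac{ {}_{3}F_{2}\!\!\left[ \begin{matrix} \tfrac{1}{2}-m,1,-\eta \\ \tfrac{3}{2}+m,2+\eta \end{matrix} \ \Bigg| \ -1 \right]}{ {}_{3}F_{2}\!\!\left[ \begin{matrix} \tfrac{1}{2}-m,\tfrac{1}{2},1+\eta \\ 1,2+\eta \end{matrix} \ \Bigg| \ 1 \right]}.$$
   Context: ${}_pF_q\left[\begin{matrix} a_1,\dots,a_p\\ b_1,\dots,b_q\end{matrix}\,\Big|\, z\right] = \sum_{n\ge 0} \frac{(a_1)_n\cdots(a_p)_n}{(b_1)_n\cdots(b_q)_n}\frac{z^n}{n!}$ with $(x)_n = \Gamma(x+n)/\Gamma(x)$. *)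

theory Defs
  imports Complex_Main
begin

definition hyperpFq :: "real list \<Rightarrow> real list \<Rightarrow> real \<Rightarrow> real" where
  "hyperpFq as bs z =
     (\<Sum>n. (prod_list (map (\<lambda>a. pochhammer a n) as)
             / prod_list (map (\<lambda>b. pochhammer b n) bs)) * z ^ n / fact n)"

end

theory Submission
  imports Defs "HOL-Analysis.Analysis" "HOL-Real_Asymp.Real_Asymp"
begin

(*
  Write c_j = (1/2 - m)_j (1/2)_j / (j!)^2 and S(x) = sum_j c_j / (x + j + 1). Since
  (1 + x)_j / (2 + x)_j = (1 + x) / (x + j + 1), the denominator 3F2 equals (1 + eta) S(eta).
  Each 1 / (x + j + 1) has a terminating partial fraction expansion
  sum_{n <= j} (-1)^n w_{j,n} (-x)_n / (1 + x)_{n+1} with weights 0 <= w_{j,n}.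
  Inserting it into S(x) and summing the absolutely convergent double series over j first gives
  S(x) = V * sum_n (-1)^n u_n (-x)_n / (1 + x)_{n+1} with u_n = (1/2 - m)_n / (3/2 + m)_n,
  because sum_j c_j w_{j,n} satisfies the same first order recurrence in n as u_n (a telescoping
  argument). The numerator 3F2 is (1 + eta) times the last series, so the quotient is 1 / V.
  Finally V = S(0) = 4^(m+1) / (pi C(2m, m) (2m + 1)): for m = 0 the partial sums of S(0) are
  4 J c_J, which tend to 4 / pi because (1/2)_J / J! ~ 1 / sqrt(pi J), and a second telescoping
  sum gives the recurrence in m.
*)

section \<open>Growth estimates\<close>

lemma pochhammer_fact_powr_LIMSEQ:
  fixes z :: real
  shows "(\<lambda>n. pochhammer z n / (fact n * (real n + 1) powr (z - 1))) \<longlonglongrightarrow> rGamma z"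
proof -
  have "(\<lambda>n. rGamma_series z n * (real n powr z / ((real n + 1) * (real n + 2) powr (z - 1))))
          \<longlonglongrightarrow> rGamma z * 1"
    by (intro tendsto_mult rGamma_series_LIMSEQ) real_asymp
  moreover have "\<forall>\<^sub>F n in sequentially.
      rGamma_series z n * (real n powr z / ((real n + 1) * (real n + 2) powr (z - 1)))
      = pochhammer z (Suc n) / (fact (Suc n) * (real (Suc n) + 1) powr (z - 1))"
    using eventually_gt_at_top[of "0::nat"]
  proof eventually_elim
    case (elim n)
    then have "exp (z * ln (real n)) = real n powr z" "real n powr z > 0"
      by (simp_all add: powr_def)
    then show ?case
      by (simp add: rGamma_series_def field_simps add_ac)
  qed
  ultimately have "(\<lambda>n. pochhammer z (Suc n) / (fact (Suc n) * (real (Suc n) + 1) powr (z - 1)))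
                     \<longlonglongrightarrow> rGamma z"
    using Lim_transform_eventually by fastforce
  then show ?thesis
    by (rule LIMSEQ_imp_Suc)
qed

lemma pochhammer_fact_powr_bound:
  fixes z :: real
  obtains C where "C \<ge> 0" "\<And>n. \<bar>pochhammer z n\<bar> \<le> C * (fact n * (real n + 1) powr (z - 1))"
proof -
  have "Bseq (\<lambda>n. pochhammer z n / (fact n * (real n + 1) powr (z - 1)))"
    using pochhammer_fact_powr_LIMSEQ by (rule convergent_imp_Bseq[OF convergentI])
  then obtain K where "K > 0" "\<And>n. \<bar>pochhammer z n / (fact n * (real n + 1) powr (z - 1))\<bar> \<le> K"
    by (auto elim!: BseqE)
  then show ?thesis
    using that[of K] by (simp add: abs_divide divide_le_eq)
qed

lemma inverse_pochhammer_fact_powr_bound: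
  fixes z :: real
  assumes "z > 0"
  obtains C where "C \<ge> 0" "\<And>n. 1 / pochhammer z n \<le> C / (fact n * (real n + 1) powr (z - 1))"
proof -
  have "rGamma z \<noteq> 0"
    using assms by (auto simp: rGamma_eq_zero_iff dest: nonpos_Ints_nonpos)
  then have "(\<lambda>n. inverse (pochhammer z n / (fact n * (real n + 1) powr (z - 1))))
               \<longlonglongrightarrow> inverse (rGamma z)"
    by (intro tendsto_inverse pochhammer_fact_powr_LIMSEQ)
  then have "Bseq (\<lambda>n. inverse (pochhammer z n / (fact n * (real n + 1) powr (z - 1))))"
    by (rule convergent_imp_Bseq[OF convergentI])
  then obtain K where
    "K > 0" "\<And>n. \<bar>inverse (pochhammer z n / (fact n * (real n + 1) powr (z - 1)))\<bar> \<le> K"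
    by (auto elim!: BseqE)
  moreover have "1 / pochhammer z n \<le> K / (fact n * (real n + 1) powr (z - 1))" for n
  proof -
    have "pochhammer z n > 0"
      using assms by (rule pochhammer_pos)
    then show ?thesis
      using calculation(2)[of n] by (simp add: field_simps)
  qed
  ultimately show ?thesis
    using that[of K] by simp
qed

lemma Suc_powr_le_inverse_power:
  fixes e :: real
  assumes "e \<le> - real k"
  shows "(real j + 1) powr e \<le> 1 / (real j + 1) ^ k"
proof -
  have "(real j + 1) powr e \<le> (real j + 1) powr (- real k)"
    using assms by (intro powr_mono) auto
  also have "\<dots> = 1 / (real j + 1) ^ k"
    by (simp add: powr_minus_divide powr_realpow)
  finally show ?thesis .
qed

lemma summable_Suc_powr:
  assumes "e < -1"
  shows "summable (\<lambda>j::nat. (real j + 1) powr e)"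
proof -
  have "summable (\<lambda>j::nat. real (Suc j) powr e)"
    using assms by (subst summable_Suc_iff) (simp add: summable_real_powr_iff)
  then show ?thesis
    by (simp add: add.commute)
qed

lemma summable_on_product_nonneg:
  fixes a b :: "nat \<Rightarrow> real"
  assumes "summable a" "summable b" "\<And>j. a j \<ge> 0" "\<And>n. b n \<ge> 0"
  shows "(\<lambda>(j, n). a j * b n) summable_on UNIV \<times> UNIV"
proof (rule summable_on_SigmaI[where g = "\<lambda>j. a j * suminf b"])
  fix j :: nat
  have "(b has_sum suminf b) UNIV"
    using assms by (intro sums_nonneg_imp_has_sum summable_sums) auto
  then show "((\<lambda>n. (\<lambda>(j, n). a j * b n) (j, n)) has_sum a j * suminf b) UNIV"
    by (simp add: has_sum_cmult_right)
next
  have "summable (\<lambda>j. a j * suminf b)"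
    using assms(1) by (rule summable_mult2)
  moreover have "a j * suminf b \<ge> 0" for j
    using assms by (simp add: suminf_nonneg)
  ultimately show "(\<lambda>j. a j * suminf b) summable_on UNIV"
    by (simp add: summable_on_UNIV_nonneg_real_iff)
qed (use assms in auto)

section \<open>A terminating partial fraction expansion\<close>

(* For n <= j this is (j!)^2 / ((j - n)! (j + n)!); it vanishes for n > j. *)
definition pfrac_ratio :: "nat \<Rightarrow> nat \<Rightarrow> real" where
  "pfrac_ratio j n = (\<Prod>i<n. (real j - real i) / (real j + 1 + real i))"

definition pfrac_coeff :: "nat \<Rightarrow> nat \<Rightarrow> real" where
  "pfrac_coeff j n = (2 * real n + 1) * pfrac_ratio j n / (real j + real n + 1)"

definition pfrac_basis :: "real \<Rightarrow> nat \<Rightarrow> real" where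
  "pfrac_basis x n = pochhammer (- x) n / pochhammer (1 + x) (Suc n)"

lemma pfrac_ratio_eq_0: "j < n \<Longrightarrow> pfrac_ratio j n = 0"
  unfolding pfrac_ratio_def by (intro prod_zero) (auto intro!: bexI[of _ j])

lemma pfrac_ratio_0 [simp]: "pfrac_ratio j 0 = 1"
  by (simp add: pfrac_ratio_def)

lemma pfrac_ratio_Suc:
  "pfrac_ratio j (Suc n) = pfrac_ratio j n * ((real j - real n) / (real j + 1 + real n))"
  by (simp add: pfrac_ratio_def)

lemma pfrac_ratio_nonneg: "pfrac_ratio j n \<ge> 0"
proof (cases "n \<le> j")
  case True
  then show ?thesis
    unfolding pfrac_ratio_def by (intro prod_nonneg) auto
qed (simp add: pfrac_ratio_eq_0)

lemma pfrac_ratio_le_1: "pfrac_ratio j n \<le> 1"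
proof (cases "n \<le> j")
  case True
  then show ?thesis
    unfolding pfrac_ratio_def by (intro prod_le_1) auto
qed (simp add: pfrac_ratio_eq_0)

lemma pfrac_ratio_Suc_left:
  "(real j + 1 - real n) * pfrac_ratio (Suc j) n * (real j + 1 + real n)
     = pfrac_ratio j n * (real j + 1) ^ 2"
proof (induction n)
  case (Suc n)
  have d: "real j + 2 + real n \<noteq> 0" "real j + 1 + real n \<noteq> 0"
    by linarith+
  have "(real j + 1 - real (Suc n)) * pfrac_ratio (Suc j) (Suc n) * (real j + 1 + real (Suc n))
      = (real j - real n) * ((real j + 1 - real n) * pfrac_ratio (Suc j) n)"
    using d by (simp add: pfrac_ratio_Suc field_simps)
  also have "(real j + 1 - real n) * pfrac_ratio (Suc j) n
      = pfrac_ratio j n * (real j + 1) ^ 2 / (real j + 1 + real n)"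
    using Suc.IH d by (simp add: field_simps)
  also have "(real j - real n) * \<dots> = pfrac_ratio j (Suc n) * (real j + 1) ^ 2"
    using d by (simp add: pfrac_ratio_Suc field_simps)
  finally show ?case .
qed (simp add: power2_eq_square)

lemma pfrac_ratio_le_exp:
  assumes "n \<le> j" "0 < n"
  shows "pfrac_ratio j n \<le> exp (- (real n ^ 2 / (real j + real n)))"
proof -
  have jn: "real j + real n > 0"
    using assms by simp
  have "pfrac_ratio j n \<le> (\<Prod>i<n. exp (- ((2 * real i + 1) / (real j + real n))))"
    unfolding pfrac_ratio_def
  proof (intro prod_mono conjI)
    fix i assume i: "i \<in> {..<n}"
    then show "0 \<le> (real j - real i) / (real j + 1 + real i)"
      using assms by auto
    have "(real j - real i) / (real j + 1 + real i) = 1 - (2 * real i + 1) / (real j + 1 + real i)"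
      by (simp add: field_simps)
    also have "\<dots> \<le> 1 - (2 * real i + 1) / (real j + real n)"
      using i jn by (intro diff_left_mono divide_left_mono) auto
    also have "\<dots> \<le> exp (- ((2 * real i + 1) / (real j + real n)))"
      using exp_ge_add_one_self[of "- ((2 * real i + 1) / (real j + real n))"] by simp
    finally show "(real j - real i) / (real j + 1 + real i) \<le> \<dots>" .
  qed
  also have "\<dots> = exp (\<Sum>i<n. - ((2 * real i + 1) / (real j + real n)))"
    by (simp add: exp_sum)
  also have "\<dots> = exp (- ((\<Sum>i<n. 2 * real i + 1) / (real j + real n)))"
    by (simp add: sum_divide_distrib sum_negf)
  also have "(\<Sum>i<n. 2 * real i + 1) = real n ^ 2"
    by (induction n) (auto simp: power2_eq_square algebra_simps)
  finally show ?thesis .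
qed

lemma pfrac_ratio_le_quadratic: "pfrac_ratio j n \<le> 8 * (real j + 1) / (real n + 1) ^ 2"
proof (cases "0 < n \<and> n \<le> j")
  case True
  define y where "y = real n ^ 2 / (real j + real n)"
  have jn: "real j + real n > 0"
    using True by simp
  have "pfrac_ratio j n \<le> exp (- y)"
    using pfrac_ratio_le_exp True by (simp add: y_def)
  also have "\<dots> \<le> 1 / (1 + y)"
    using exp_ge_add_one_self[of y] by (simp add: exp_minus y_def add_pos_nonneg field_simps)
  also have "\<dots> = (real j + real n) / (real j + real n + real n ^ 2)"
    using jn by (simp add: y_def field_simps)
  also have "\<dots> \<le> 8 * (real j + 1) / (real n + 1) ^ 2"
  proof -
    have "real j + real n \<le> 2 * (real j + 1)"
      using True by simp
    moreover have "(real n + 1) ^ 2 \<le> 4 * (real j + real n + real n ^ 2)"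
    proof -
      have "1 \<le> real n ^ 2"
        using True by simp
      then show ?thesis
        unfolding power2_sum by simp
    qed
    ultimately have "(real j + real n) * (real n + 1) ^ 2
                       \<le> (2 * (real j + 1)) * (4 * (real j + real n + real n ^ 2))"
      by (intro mult_mono) auto
    then have "(real j + real n) * (real n + 1) ^ 2 / ((real j + real n + real n ^ 2) * (real n + 1) ^ 2)
        \<le> 8 * (real j + 1) * (real j + real n + real n ^ 2) / ((real j + real n + real n ^ 2) * (real n + 1) ^ 2)"
      by (intro divide_right_mono) (simp_all add: algebra_simps)
    moreover have "real j + real n + real n ^ 2 > 0"
      using jn by (metis add_pos_nonneg zero_le_power2)
    ultimately show ?thesis
      by simp
  qed
  finally show ?thesis .
next
  case False
  then show ?thesis
    by (cases "n = 0") (auto simp: pfrac_ratio_eq_0)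
qed

lemma pfrac_ratio_le_powr:
  assumes "0 < \<theta>" "\<theta> \<le> 1"
  shows "pfrac_ratio j n \<le> (8 * (real j + 1) / (real n + 1) ^ 2) powr \<theta>"
proof (cases "8 * (real j + 1) / (real n + 1) ^ 2 \<ge> 1")
  case True
  then have "1 \<le> (8 * (real j + 1) / (real n + 1) ^ 2) powr \<theta>"
    using assms by (intro ge_one_powr_ge_zero) auto
  then show ?thesis
    using pfrac_ratio_le_1 order_trans by blast
next
  case False
  then have "8 * (real j + 1) / (real n + 1) ^ 2 \<le> (8 * (real j + 1) / (real n + 1) ^ 2) powr \<theta>"
    using assms powr_mono'[of \<theta> 1 "8 * (real j + 1) / (real n + 1) ^ 2"] by simp
  then show ?thesis
    using pfrac_ratio_le_quadratic order_trans by blast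
qed

lemma pfrac_coeff_nonneg: "pfrac_coeff j n \<ge> 0"
  by (simp add: pfrac_coeff_def pfrac_ratio_nonneg)

lemma pfrac_coeff_le: "pfrac_coeff j n \<le> (2 * real n + 1) / (real j + real n + 1)"
  unfolding pfrac_coeff_def
  using pfrac_ratio_le_1[of j n] by (intro divide_right_mono) auto

lemma pfrac_coeff_le_powr:
  assumes "0 < \<theta>" "\<theta> \<le> 1"
  shows "pfrac_coeff j n \<le> 2 * 8 powr \<theta> * ((real j + 1) powr (\<theta> - 1) * (real n + 1) powr (1 - 2 * \<theta>))"
proof -
  define y where "y = real j + 1"
  define z where "z = real n + 1"
  have y: "y > 0" and z: "z > 0"
    by (auto simp: y_def z_def)
  have "pfrac_ratio j n \<le> (8 * y / z ^ 2) powr \<theta>"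
    using pfrac_ratio_le_powr assms by (simp add: y_def z_def)
  also have "\<dots> = 8 powr \<theta> * (y powr \<theta> / (z powr 2) powr \<theta>)"
    using y z by (simp add: powr_divide powr_mult powr_numeral)
  finally have ratio: "pfrac_ratio j n \<le> 8 powr \<theta> * (y powr \<theta> / z powr (2 * \<theta>))"
    by (simp add: powr_powr)
  have "pfrac_coeff j n \<le> (2 * real n + 1) * pfrac_ratio j n / y"
    using pfrac_ratio_nonneg[of j n] y
    by (auto simp: pfrac_coeff_def y_def intro!: divide_left_mono mult_nonneg_nonneg)
  also have "\<dots> \<le> (2 * z) * (8 powr \<theta> * (y powr \<theta> / z powr (2 * \<theta>))) / y"
    using ratio pfrac_ratio_nonneg[of j n] y by (intro divide_right_mono mult_mono) (auto simp: z_def)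
  also have "\<dots> = 2 * 8 powr \<theta> * ((y powr \<theta> / y powr 1) * (z powr 1 / z powr (2 * \<theta>)))"
    using y z by (simp add: ac_simps)
  also have "\<dots> = 2 * 8 powr \<theta> * (y powr (\<theta> - 1) * z powr (1 - 2 * \<theta>))"
    by (simp only: powr_diff)
  finally show ?thesis
    by (simp add: y_def z_def)
qed

lemma pfrac_basis_bound:
  assumes "x > -1"
  obtains C where "\<And>n. \<bar>pfrac_basis x n\<bar> \<le> C * (real n + 1) powr (- 2 * (x + 1))"
proof -
  obtain C1 where "C1 \<ge> 0"
    and C1: "\<And>n. \<bar>pochhammer (- x) n\<bar> \<le> C1 * (fact n * (real n + 1) powr (- x - 1))"
    by (rule pochhammer_fact_powr_bound[of "- x"]) auto
  obtain C2 where "C2 \<ge> 0"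
    and C2: "\<And>n. 1 / pochhammer (1 + x) n \<le> C2 / (fact n * (real n + 1) powr x)"
    using inverse_pochhammer_fact_powr_bound[of "1 + x"] assms by auto
  define \<mu> where "\<mu> = min 1 (1 + x)"
  have \<mu>: "\<mu> > 0"
    using assms by (simp add: \<mu>_def)
  have "\<bar>pfrac_basis x n\<bar> \<le> (C1 * C2 / \<mu>) * (real n + 1) powr (- 2 * (x + 1))" for n
  proof -
    have pos: "pochhammer (1 + x) n > 0" "1 + x + real n > 0"
      using assms by (auto intro: pochhammer_pos)
    have lin: "\<mu> * (real n + 1) \<le> 1 + x + real n"
      by (cases "x \<ge> 0") (auto simp: \<mu>_def algebra_simps mult_nonpos_nonneg)
    have "\<bar>pfrac_basis x n\<bar>
          = \<bar>pochhammer (- x) n\<bar> * (1 / pochhammer (1 + x) n) * (1 / (1 + x + real n))"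
      using pos by (simp add: pfrac_basis_def pochhammer_Suc abs_mult abs_divide)
    also have "\<dots> \<le> (C1 * (fact n * (real n + 1) powr (- x - 1)))
                    * (C2 / (fact n * (real n + 1) powr x)) * (1 / (\<mu> * (real n + 1)))"
      using \<open>C1 \<ge> 0\<close> \<open>C2 \<ge> 0\<close> pos lin \<mu>
      by (intro mult_mono C1 C2 divide_left_mono) auto
    also have "\<dots> = (C1 * C2 / \<mu>) * ((real n + 1) powr (- x - 1) / (real n + 1) powr x / (real n + 1) powr 1)"
      using \<mu> by (simp add: field_simps)
    also have "\<dots> = (C1 * C2 / \<mu>) * (real n + 1) powr (- 2 * (x + 1))"
      by (simp only: powr_diff[symmetric]) (simp add: algebra_simps)
    finally show ?thesis .
  qed
  then show ?thesis
    using that by blast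
qed

lemma pfrac_expansion_remainder:
  assumes "x > -1"
  shows "1 / (x + real j + 1) - (\<Sum>n<k. (-1) ^ n * pfrac_coeff j n * pfrac_basis x n)
           = (-1) ^ k * pfrac_ratio j k * pochhammer (- x) k / (pochhammer (1 + x) k * (x + real j + 1))"
proof (induction k)
  case (Suc k)
  define P where "P = (-1) ^ k * pfrac_ratio j k * pochhammer (- x) k / pochhammer (1 + x) k"
  have ne: "pochhammer (1 + x) k \<noteq> 0" "1 + x + real k \<noteq> 0" "x + real j + 1 \<noteq> 0"
    "real j + real k + 1 \<noteq> 0" "real j + 1 + real k \<noteq> 0"
    using assms pochhammer_pos[of "1 + x" k] by auto
  have "(-1) ^ k * pfrac_coeff j k * pfrac_basis x k
          = P * ((2 * real k + 1) / ((real j + real k + 1) * (1 + x + real k)))"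
    using ne by (simp add: P_def pfrac_coeff_def pfrac_basis_def pochhammer_Suc field_simps)
  moreover have "P * (1 / (x + real j + 1)) = 1 / (x + real j + 1) - (\<Sum>n<k. (-1) ^ n * pfrac_coeff j n * pfrac_basis x n)"
    using Suc.IH by (simp add: P_def)
  ultimately have "1 / (x + real j + 1) - (\<Sum>n<Suc k. (-1) ^ n * pfrac_coeff j n * pfrac_basis x n)
        = P * (1 / (x + real j + 1)
               - (2 * real k + 1) / ((real j + real k + 1) * (1 + x + real k)))"
    by (simp add: right_diff_distrib)
  also have "1 / (x + real j + 1) - (2 * real k + 1) / ((real j + real k + 1) * (1 + x + real k))
      = - ((real j - real k) * (real k - x))
          / ((real j + 1 + real k) * (1 + x + real k) * (x + real j + 1))"
  proof -
    have "(real j + real k + 1) * (1 + x + real k) - (2 * real k + 1) * (x + real j + 1)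
            = - ((real j - real k) * (real k - x))"
      by (simp add: algebra_simps)
    then show ?thesis
      using ne by (simp add: diff_frac_eq mult_ac add_ac)
  qed
  also have "P * \<dots> = (-1) ^ Suc k * pfrac_ratio j (Suc k) * pochhammer (- x) (Suc k)
                        / (pochhammer (1 + x) (Suc k) * (x + real j + 1))"
    using ne by (simp add: P_def pfrac_ratio_Suc pochhammer_Suc field_simps)
  finally show ?case .
qed simp

lemma pfrac_expansion:
  assumes "x > -1"
  shows "(\<Sum>n<Suc j. (-1) ^ n * pfrac_coeff j n * pfrac_basis x n) = 1 / (x + real j + 1)"
  using pfrac_expansion_remainder[OF assms, of j "Suc j"] by (simp add: pfrac_ratio_eq_0)

section \<open>The coefficients of the denominator series\<close>

definition den_coeff :: "nat \<Rightarrow> nat \<Rightarrow> real" where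
  "den_coeff m j = pochhammer (1/2 - real m) j * pochhammer (1/2) j / fact j ^ 2"

(* Equal to 4^(m+1) / (pi C(2m, m) (2m + 1)) by central_const_binomial; this form makes the
   recurrence in m immediate. *)
definition central_const :: "nat \<Rightarrow> real" where
  "central_const m = 2 * fact m / (pi * pochhammer (1/2) (Suc m))"

lemma den_coeff_Suc:
  "den_coeff m (Suc j) = den_coeff m j * ((real j + 1/2 - real m) * (real j + 1/2)) / (real j + 1) ^ 2"
  by (simp add: den_coeff_def pochhammer_Suc field_simps power2_eq_square)

lemma den_coeff_Suc_param:
  "den_coeff (Suc m) j * (real j - 1/2 - real m) = (- 1/2 - real m) * den_coeff m j"
proof -
  define b where "b = - 1/2 - real m"
  have "den_coeff (Suc m) j * (b + real j)
          = pochhammer b j * (b + real j) * pochhammer (1/2) j / fact j ^ 2"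
    by (simp add: den_coeff_def b_def)
  also have "pochhammer b j * (b + real j) = b * pochhammer (b + 1) j"
    using pochhammer_rec[of b j] pochhammer_Suc[of b j] by simp
  also have "b * pochhammer (b + 1) j * pochhammer (1/2) j / fact j ^ 2 = b * den_coeff m j"
    by (simp add: den_coeff_def b_def)
  finally show ?thesis
    by (simp add: b_def algebra_simps)
qed

lemma den_coeff_0_pos: "den_coeff 0 j > 0"
  by (simp add: den_coeff_def pochhammer_pos)

lemma den_coeff_bound:
  obtains C where "C \<ge> 0" "\<And>j. \<bar>den_coeff m j\<bar> \<le> C / (real j + 1) ^ (m + 1)"
proof -
  obtain C1 where "C1 \<ge> 0"
    and C1: "\<And>j. \<bar>pochhammer (1/2 - real m) j\<bar> \<le> C1 * (fact j * (real j + 1) powr (1/2 - real m - 1))"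
    by (rule pochhammer_fact_powr_bound[of "1/2 - real m"]) blast
  obtain C2 where "C2 \<ge> 0"
    and C2: "\<And>j. \<bar>pochhammer (1/2) j\<bar> \<le> C2 * (fact j * (real j + 1) powr (1/2 - 1))"
    by (rule pochhammer_fact_powr_bound[of "1/2"]) blast
  have "\<bar>den_coeff m j\<bar> \<le> (C1 * C2) / (real j + 1) ^ (m + 1)" for j
  proof -
    have "\<bar>den_coeff m j\<bar> = \<bar>pochhammer (1/2 - real m) j\<bar> * \<bar>pochhammer (1/2) j\<bar> / fact j ^ 2"
      by (simp add: den_coeff_def abs_mult)
    also have "\<dots> \<le> (C1 * (fact j * (real j + 1) powr (1/2 - real m - 1)))
                    * (C2 * (fact j * (real j + 1) powr (1/2 - 1))) / fact j ^ 2"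
      using \<open>C1 \<ge> 0\<close> by (intro divide_right_mono mult_mono C1 C2) auto
    also have "\<dots> = (C1 * C2) * ((real j + 1) powr (1/2 - real m - 1) * (real j + 1) powr (1/2 - 1))"
      by (simp add: power2_eq_square)
    also have "(real j + 1) powr (1/2 - real m - 1) * (real j + 1) powr (1/2 - 1)
                 = (real j + 1) powr (- real (m + 1))"
    proof -
      have "1/2 - real m - 1 + (1/2 - 1) = - real (m + 1)"
        by simp
      then show ?thesis
        by (simp only: powr_add[symmetric])
    qed
    also have "\<dots> \<le> 1 / (real j + 1) ^ (m + 1)"
      by (rule Suc_powr_le_inverse_power) simp
    finally show ?thesis
      using \<open>C1 \<ge> 0\<close> \<open>C2 \<ge> 0\<close> by (simp add: mult_left_mono)
  qed
  with \<open>C1 \<ge> 0\<close> \<open>C2 \<ge> 0\<close> show ?thesis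
    by (intro that[of "C1 * C2"]) simp_all
qed
lemma den_coeff_le_inverse:
  obtains C where "C \<ge> 0" "\<And>j. \<bar>den_coeff m j\<bar> \<le> C / (real j + 1)"
proof -
  obtain C where "C \<ge> 0" and C: "\<And>j. \<bar>den_coeff m j\<bar> \<le> C / (real j + 1) ^ (m + 1)"
    by (rule den_coeff_bound[of m]) blast
  have "C / (real j + 1) ^ (m + 1) \<le> C / (real j + 1)" for j
    using \<open>C \<ge> 0\<close> power_increasing[of 1 "m + 1" "real j + 1"] by (intro divide_left_mono) auto
  then show ?thesis
    using that[of C] \<open>C \<ge> 0\<close> C order_trans by blast
qed

lemma den_coeff_0_partial_sums: "(\<Sum>j<J. den_coeff 0 j / (real j + 1)) = 4 * real J * den_coeff 0 J"
proof (induction J)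
  case (Suc J)
  have step: "4 * t * (c * (t - 1/2) ^ 2 / t ^ 2) - 4 * (t - 1) * c = c / t"
    if "t > 0" for t c :: real
    using that by (simp add: field_simps power2_eq_square)
  have "4 * real (Suc J) * den_coeff 0 (Suc J) - 4 * real J * den_coeff 0 J
          = den_coeff 0 J / (real J + 1)"
    using step[of "real J + 1" "den_coeff 0 J"] by (simp add: den_coeff_Suc power2_eq_square add_ac)
  then show ?case
    using Suc.IH by simp
qed simp

lemma den_coeff_0_times_LIMSEQ: "(\<lambda>J. 4 * real J * den_coeff 0 J) \<longlonglongrightarrow> 4 / pi"
proof -
  define q where "q J = pochhammer (1/2) J / (fact J * (real J + 1) powr (1/2 - 1))" for J
  have "q \<longlonglongrightarrow> rGamma (1/2)"
    unfolding q_def by (rule pochhammer_fact_powr_LIMSEQ)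
  then have q: "q \<longlonglongrightarrow> 1 / sqrt pi"
    by (metis rGamma_inverse_Gamma Gamma_one_half_real inverse_eq_divide)
  have frac: "(\<lambda>J. real J / (real J + 1)) \<longlonglongrightarrow> 1"
    by real_asymp
  have "(\<lambda>J. q J ^ 2 * (4 * (real J / (real J + 1)))) \<longlonglongrightarrow> (1 / sqrt pi) ^ 2 * (4 * 1)"
    by (intro tendsto_mult tendsto_power q tendsto_const frac)
  moreover have "q J ^ 2 * (4 * (real J / (real J + 1))) = 4 * real J * den_coeff 0 J" for J
  proof -
    define s where "s = (real J + 1) powr (1/2 - 1)"
    have "s * s = (real J + 1) powr ((1/2 - 1) + (1/2 - 1))"
      by (simp only: s_def powr_add)
    also have "\<dots> = 1 / (real J + 1)"
      by (simp add: powr_minus_divide)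
    finally have "fact J * fact J * (s * s * (real J + 1)) = (fact J * fact J :: real)"
      by simp
    moreover have "s > 0"
      by (simp add: s_def)
    ultimately show ?thesis
      unfolding q_def den_coeff_def s_def[symmetric]
      by (simp add: power2_eq_square field_simps)
  qed
  ultimately show ?thesis
    by (simp add: power_divide)
qed

lemma den_coeff_0_sums: "(\<lambda>j. den_coeff 0 j / (real j + 1)) sums (4 / pi)"
  unfolding sums_def den_coeff_0_partial_sums by (rule den_coeff_0_times_LIMSEQ)
lemma den_coeff_Suc_times_LIMSEQ: "(\<lambda>j. real j * den_coeff (Suc m) j) \<longlonglongrightarrow> 0"
proof -
  obtain C where "C \<ge> 0" and C: "\<And>j. \<bar>den_coeff (Suc m) j\<bar> \<le> C / (real j + 1) ^ (Suc m + 1)"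
    by (rule den_coeff_bound[of "Suc m"]) blast
  show ?thesis
  proof (rule Lim_null_comparison)
    show "(\<lambda>j. C / (real j + 1)) \<longlonglongrightarrow> 0"
      by real_asymp
    have "\<bar>real j * den_coeff (Suc m) j\<bar> \<le> C / (real j + 1)" for j
    proof -
      have "C / (real j + 1) ^ (Suc m + 1) \<le> C / (real j + 1) ^ 2"
        using \<open>C \<ge> 0\<close> by (intro divide_left_mono power_increasing) auto
      then have "real j * \<bar>den_coeff (Suc m) j\<bar> \<le> real j * (C / (real j + 1) ^ 2)"
        using C[of j] by (intro mult_left_mono) auto
      also have "\<dots> = real j / (real j + 1) * (C / (real j + 1))"
        by (simp add: power2_eq_square)
      also have "\<dots> \<le> 1 * (C / (real j + 1))"
        using \<open>C \<ge> 0\<close> by (intro mult_right_mono) auto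
      finally show ?thesis
        by (simp add: abs_mult)
    qed
    then show "\<forall>\<^sub>F j in sequentially. norm (real j * den_coeff (Suc m) j) \<le> C / (real j + 1)"
      by simp
  qed
qed

lemma den_coeff_Suc_param_telescope:
  "den_coeff (Suc m) j / (real j + 1) - (real m + 1) / (real m + 3/2) * (den_coeff m j / (real j + 1))
     = - 1 / ((real m + 1/2) * (real m + 3/2)) * (real (Suc j) * den_coeff (Suc m) (Suc j))
       - - 1 / ((real m + 1/2) * (real m + 3/2)) * (real j * den_coeff (Suc m) j)"
proof -
  define p where "p = real m + 1/2"
  have "p > 0"
    by (simp add: p_def)
  have "den_coeff (Suc m) j * (real j - p) = - p * den_coeff m j"
    using den_coeff_Suc_param[of m j] by (simp add: p_def algebra_simps)
  moreover have "den_coeff (Suc m) (Suc j) * ((real j + 1) * (real j + 1))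
                   = den_coeff (Suc m) j * ((real j - p) * (real j + 1/2))"
  proof -
    have "real j + 1/2 - real (Suc m) = real j - p"
      by (simp add: p_def)
    then show ?thesis
      unfolding den_coeff_Suc[of "Suc m" j] by (simp add: power2_eq_square)
  qed
  moreover have "inverse (real j + 1) * (real j + 1) = 1" "inverse (p + 1) * (p + 1) = 1"
    "inverse p * p = 1"
    using \<open>p > 0\<close> by auto
  ultimately have "den_coeff (Suc m) j / (real j + 1) - (p + 1/2) / (p + 1) * (den_coeff m j / (real j + 1))
     = - 1 / (p * (p + 1)) * (real (Suc j) * den_coeff (Suc m) (Suc j))
       - - 1 / (p * (p + 1)) * (real j * den_coeff (Suc m) j)"
    unfolding divide_inverse inverse_mult_distrib of_nat_Suc by algebra
  moreover have "p + 1/2 = real m + 1" "p + 1 = real m + 3/2"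
    by (simp_all add: p_def)
  ultimately show ?thesis
    by (simp only: p_def)
qed

lemma den_coeff_sums_Suc_param:
  assumes "(\<lambda>j. den_coeff m j / (real j + 1)) sums V"
  shows "(\<lambda>j. den_coeff (Suc m) j / (real j + 1)) sums ((real m + 1) / (real m + 3/2) * V)"
proof -
  define H where "H j = - 1 / ((real m + 1/2) * (real m + 3/2)) * (real j * den_coeff (Suc m) j)" for j
  have "H \<longlonglongrightarrow> 0"
    unfolding H_def by (rule tendsto_mult_right_zero) (rule den_coeff_Suc_times_LIMSEQ)
  then have "(\<lambda>j. H (Suc j) - H j) sums (0 - H 0)"
    by (rule telescope_sums)
  then have "(\<lambda>j. den_coeff (Suc m) j / (real j + 1)
                 - (real m + 1) / (real m + 3/2) * (den_coeff m j / (real j + 1))) sums 0"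
    unfolding den_coeff_Suc_param_telescope by (simp add: H_def)
  from sums_add[OF this sums_mult[OF assms, of "(real m + 1) / (real m + 3/2)"]]
  show ?thesis
    by simp
qed

lemma central_const_0: "central_const 0 = 4 / pi"
  by (simp add: central_const_def)

lemma central_const_Suc: "central_const (Suc m) = (real m + 1) / (real m + 3/2) * central_const m"
proof -
  have "pochhammer (1/2 :: real) (Suc m) > 0"
    by (simp add: pochhammer_pos)
  then show ?thesis
    unfolding central_const_def pochhammer_Suc[of "1/2" "Suc m"] fact_Suc
    by (simp add: field_simps)
qed

lemma central_const_pos: "central_const m > 0"
  by (simp add: central_const_def pochhammer_pos)

lemma den_coeff_sums_central_const: "(\<lambda>j. den_coeff m j / (real j + 1)) sums central_const m"
proof (induction m)
  case 0
  then show ?case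
    using den_coeff_0_sums by (simp add: central_const_0)
next
  case (Suc m)
  then show ?case
    using den_coeff_sums_Suc_param by (simp add: central_const_Suc)
qed

lemma central_const_binomial:
  "central_const m = 4 ^ (m + 1) / (pi * real (2 * m choose m) * (2 * real m + 1))"
proof -
  have "real (2 * m choose m) * (fact m * fact m) = fact (2 * m)"
    by (simp add: binomial_fact)
  then have binomial: "real (2 * m choose m) * fact m = 4 ^ m * pochhammer (1/2) m"
    by (simp add: fact_double power_mult)
  have "2 * fact m * (pi * real (2 * m choose m) * (2 * real m + 1))
          = 2 * pi * (2 * real m + 1) * (real (2 * m choose m) * fact m)"
    by (simp add: algebra_simps)
  also have "\<dots> = 4 ^ (m + 1) * (pi * pochhammer (1/2) (Suc m))"
    unfolding binomial pochhammer_Suc by (simp add: algebra_simps)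
  moreover have "pochhammer (1/2 :: real) (Suc m) > 0"
    by (simp add: pochhammer_pos)
  ultimately show ?thesis
    unfolding central_const_def by (simp add: divide_eq_eq eq_divide_eq)
qed
definition num_coeff :: "nat \<Rightarrow> nat \<Rightarrow> real" where
  "num_coeff m n = pochhammer (1/2 - real m) n / pochhammer (3/2 + real m) n"

lemma summable_abs_den_coeff_pfrac_coeff: "summable (\<lambda>j. \<bar>den_coeff m j * pfrac_coeff j n\<bar>)"
proof -
  obtain C where "C \<ge> 0" and C: "\<And>j. \<bar>den_coeff m j\<bar> \<le> C / (real j + 1)"
    by (rule den_coeff_le_inverse[of m]) blast
  show ?thesis
  proof (rule summable_comparison_test')
    have "summable (\<lambda>j. 1 / (real j + 1) ^ 2)"
      using inverse_squares_sums by (simp add: sums_iff add.commute)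
    then show "summable (\<lambda>j. C * (2 * real n + 1) * (1 / (real j + 1) ^ 2))"
      by (rule summable_mult)
    fix j :: nat
    have "(2 * real n + 1) / (real j + real n + 1) \<le> (2 * real n + 1) / (real j + 1)"
      by (intro divide_left_mono) auto
    then have "pfrac_coeff j n \<le> (2 * real n + 1) / (real j + 1)"
      using pfrac_coeff_le order_trans by blast
    then have "\<bar>den_coeff m j\<bar> * pfrac_coeff j n \<le> (C / (real j + 1)) * ((2 * real n + 1) / (real j + 1))"
      using C[of j] \<open>C \<ge> 0\<close> pfrac_coeff_nonneg by (intro mult_mono) auto
    then show "norm \<bar>den_coeff m j * pfrac_coeff j n\<bar> \<le> C * (2 * real n + 1) * (1 / (real j + 1) ^ 2)"
      using pfrac_coeff_nonneg[of j n] by (simp add: abs_mult power2_eq_square)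
  qed
qed

lemma summable_den_coeff_pfrac_coeff: "summable (\<lambda>j. den_coeff m j * pfrac_coeff j n)"
  using summable_abs_den_coeff_pfrac_coeff by (rule summable_rabs_cancel)

lemma den_coeff_pfrac_coeff_times_LIMSEQ:
  "(\<lambda>j. (real j - real n) * (den_coeff m j * pfrac_coeff j n)) \<longlonglongrightarrow> 0"
proof -
  obtain C where "C \<ge> 0" and C: "\<And>j. \<bar>den_coeff m j\<bar> \<le> C / (real j + 1)"
    by (rule den_coeff_le_inverse[of m]) blast
  show ?thesis
  proof (rule Lim_null_comparison)
    show "(\<lambda>j. (2 * real n + 1) * C / (real j + 1)) \<longlonglongrightarrow> 0"
      by real_asymp
    have "\<bar>(real j - real n) * (den_coeff m j * pfrac_coeff j n)\<bar> \<le> (2 * real n + 1) * C / (real j + 1)"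
      for j
    proof -
      have "\<bar>real j - real n\<bar> * pfrac_coeff j n
              \<le> (real j + real n + 1) * ((2 * real n + 1) / (real j + real n + 1))"
        using pfrac_coeff_le pfrac_coeff_nonneg by (intro mult_mono) auto
      then have "\<bar>real j - real n\<bar> * pfrac_coeff j n \<le> 2 * real n + 1"
        by (simp add: add_pos_nonneg)
      then have "\<bar>real j - real n\<bar> * pfrac_coeff j n * \<bar>den_coeff m j\<bar> \<le> (2 * real n + 1) * (C / (real j + 1))"
        using C[of j] by (intro mult_mono) auto
      then show ?thesis
        using pfrac_coeff_nonneg[of j n] by (simp add: abs_mult mult_ac)
    qed
    then show "\<forall>\<^sub>F j in sequentially.
        norm ((real j - real n) * (den_coeff m j * pfrac_coeff j n)) \<le> (2 * real n + 1) * C / (real j + 1)"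
      by simp
  qed
qed

lemma den_coeff_pfrac_coeff_telescope:
  "(real n + 3/2 + real m) * (den_coeff m j * pfrac_coeff j (Suc n))
     - (real n + 1/2 - real m) * (den_coeff m j * pfrac_coeff j n)
   = - 4 * (real n + 1) * inverse (2 * real n + 1)
       * ((real (Suc j) - real n) * (den_coeff m (Suc j) * pfrac_coeff (Suc j) n))
     - - 4 * (real n + 1) * inverse (2 * real n + 1)
       * ((real j - real n) * (den_coeff m j * pfrac_coeff j n))"
proof -
  have identity: "(N + 3/2 + M) * (c * ((2 * N + 3) * Rn * inverse (J + N + 2)))
                    - (N + 1/2 - M) * (c * ((2 * N + 1) * R * inverse (J + N + 1)))
      = - 4 * (N + 1) * inverse (2 * N + 1) * ((J + 1 - N) * (c1 * ((2 * N + 1) * R1 * inverse (J + N + 2))))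
        - - 4 * (N + 1) * inverse (2 * N + 1) * ((J - N) * (c * ((2 * N + 1) * R * inverse (J + N + 1))))"
    if "inverse (J + 1) * (J + 1) = 1" "inverse (J + N + 1) * (J + N + 1) = 1"
      "inverse (J + N + 2) * (J + N + 2) = 1" "inverse (2 * N + 1) * (2 * N + 1) = 1"
      "c1 * ((J + 1) * (J + 1)) = c * ((J + 1/2 - M) * (J + 1/2))"
      "(J + 1 - N) * R1 * (J + 1 + N) = R * ((J + 1) * (J + 1))"
      "Rn * (J + 1 + N) = R * (J - N)"
    for J N M c c1 R R1 Rn :: real
    using that by algebra
  have "pfrac_coeff j (Suc n) = (2 * real n + 3) * pfrac_ratio j (Suc n) * inverse (real j + real n + 2)"
    "pfrac_coeff j n = (2 * real n + 1) * pfrac_ratio j n * inverse (real j + real n + 1)"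
    "pfrac_coeff (Suc j) n = (2 * real n + 1) * pfrac_ratio (Suc j) n * inverse (real j + real n + 2)"
    "real (Suc j) - real n = real j + 1 - real n"
    by (simp_all add: pfrac_coeff_def divide_inverse algebra_simps)
  then show ?thesis
  proof (simp only:, intro identity)
    show "den_coeff m (Suc j) * ((real j + 1) * (real j + 1))
            = den_coeff m j * ((real j + 1/2 - real m) * (real j + 1/2))"
      by (simp add: den_coeff_Suc power2_eq_square)
    show "(real j + 1 - real n) * pfrac_ratio (Suc j) n * (real j + 1 + real n)
            = pfrac_ratio j n * ((real j + 1) * (real j + 1))"
      using pfrac_ratio_Suc_left by (simp add: power2_eq_square)
  qed (auto simp: pfrac_ratio_Suc add_pos_nonneg)
qed

lemma den_coeff_pfrac_coeff_suminf_Suc: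
  "(real n + 3/2 + real m) * (\<Sum>j. den_coeff m j * pfrac_coeff j (Suc n))
     = (real n + 1/2 - real m) * (\<Sum>j. den_coeff m j * pfrac_coeff j n)"
proof -
  define H where "H j = - 4 * (real n + 1) * inverse (2 * real n + 1)
                         * ((real j - real n) * (den_coeff m j * pfrac_coeff j n))" for j
  have "H \<longlonglongrightarrow> 0"
    unfolding H_def by (rule tendsto_mult_right_zero) (rule den_coeff_pfrac_coeff_times_LIMSEQ)
  moreover have "H 0 = 0"
    by (cases n) (simp_all add: H_def pfrac_coeff_def pfrac_ratio_eq_0)
  ultimately have "(\<lambda>j. H (Suc j) - H j) sums 0"
    using telescope_sums[of H 0] by simp
  then have "(\<lambda>j. (real n + 3/2 + real m) * (den_coeff m j * pfrac_coeff j (Suc n))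
                - (real n + 1/2 - real m) * (den_coeff m j * pfrac_coeff j n)) sums 0"
    unfolding den_coeff_pfrac_coeff_telescope H_def .
  moreover have "(\<lambda>j. (real n + 3/2 + real m) * (den_coeff m j * pfrac_coeff j (Suc n))
                     - (real n + 1/2 - real m) * (den_coeff m j * pfrac_coeff j n))
      sums ((real n + 3/2 + real m) * (\<Sum>j. den_coeff m j * pfrac_coeff j (Suc n))
            - (real n + 1/2 - real m) * (\<Sum>j. den_coeff m j * pfrac_coeff j n))"
    by (intro sums_diff sums_mult summable_sums summable_den_coeff_pfrac_coeff)
  ultimately have "0 = (real n + 3/2 + real m) * (\<Sum>j. den_coeff m j * pfrac_coeff j (Suc n))
                         - (real n + 1/2 - real m) * (\<Sum>j. den_coeff m j * pfrac_coeff j n)"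
    by (rule sums_unique2)
  then show ?thesis
    by linarith
qed

lemma den_coeff_pfrac_coeff_sums:
  "(\<lambda>j. den_coeff m j * pfrac_coeff j n) sums (num_coeff m n * central_const m)"
proof (induction n)
  case 0
  then show ?case
    using den_coeff_sums_central_const[of m] by (simp add: num_coeff_def pfrac_coeff_def add_ac)
next
  case (Suc n)
  have pos: "real n + 3/2 + real m > 0" "pochhammer (3/2 + real m) n > 0"
    by (simp_all add: pochhammer_pos)
  define S where "S k = (\<Sum>j. den_coeff m j * pfrac_coeff j k)" for k
  have "S n = num_coeff m n * central_const m"
    using Suc.IH by (simp add: S_def sums_iff)
  then have "S (Suc n) = (real n + 1/2 - real m) / (real n + 3/2 + real m) * (num_coeff m n * central_const m)"
    using den_coeff_pfrac_coeff_suminf_Suc[of n m, folded S_def] pos by (simp add: field_simps)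
  also have "\<dots> = num_coeff m (Suc n) * central_const m"
    using pos by (simp add: num_coeff_def pochhammer_Suc field_simps)
  finally show ?case
    using summable_den_coeff_pfrac_coeff[of m "Suc n"] by (simp add: S_def sums_iff)
qed

section \<open>Interchanging the double series\<close>

lemma den_coeff_pfrac_term_bound:
  assumes "\<bar>den_coeff m j\<bar> \<le> Cc / (real j + 1)" "Cc \<ge> 0"
    and "\<bar>pfrac_basis x n\<bar> \<le> Cp * (real n + 1) powr (- 2 * (x + 1))"
    and "0 < \<theta>" "\<theta> \<le> 1"
  shows "\<bar>den_coeff m j * ((-1) ^ n * pfrac_coeff j n * pfrac_basis x n)\<bar>
           \<le> 2 * Cc * \<bar>Cp\<bar> * 8 powr \<theta>
              * ((real j + 1) powr (\<theta> - 2) * (real n + 1) powr (1 - 2 * \<theta> - 2 * (x + 1)))"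
proof -
  define y where "y = real j + 1"
  define z where "z = real n + 1"
  have y: "y > 0" and z: "z > 0"
    by (auto simp: y_def z_def)
  have basis: "\<bar>pfrac_basis x n\<bar> \<le> \<bar>Cp\<bar> * z powr (- 2 * (x + 1))"
    using assms(3) by (simp add: z_def) (smt (verit) mult_right_mono powr_ge_zero)
  have "\<bar>den_coeff m j * ((-1) ^ n * pfrac_coeff j n * pfrac_basis x n)\<bar>
          = \<bar>den_coeff m j\<bar> * pfrac_coeff j n * \<bar>pfrac_basis x n\<bar>"
    using pfrac_coeff_nonneg[of j n] by (simp add: abs_mult power_abs)
  also have "\<dots> \<le> (Cc / y) * (2 * 8 powr \<theta> * (y powr (\<theta> - 1) * z powr (1 - 2 * \<theta>)))
                   * (\<bar>Cp\<bar> * z powr (- 2 * (x + 1)))"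
    using assms pfrac_coeff_le_powr[of \<theta> j n] basis pfrac_coeff_nonneg[of j n]
    by (intro mult_mono) (auto simp: y_def z_def)
  also have "\<dots> = 2 * Cc * \<bar>Cp\<bar> * 8 powr \<theta>
                   * ((y powr (\<theta> - 1) / y powr 1) * (z powr (1 - 2 * \<theta>) * z powr (- 2 * (x + 1))))"
    using y by simp
  also have "y powr (\<theta> - 1) / y powr 1 = y powr (\<theta> - 2)"
    by (simp only: powr_diff[symmetric]) simp
  also have "z powr (1 - 2 * \<theta>) * z powr (- 2 * (x + 1)) = z powr (1 - 2 * \<theta> - 2 * (x + 1))"
    by (simp only: powr_add[symmetric]) simp
  finally show ?thesis
    by (simp add: y_def z_def)
qed
definition den_sum :: "nat \<Rightarrow> real \<Rightarrow> real" where
  "den_sum m x = (\<Sum>j. den_coeff m j / (x + real j + 1))"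

lemma summable_on_den_coeff_pfrac:
  assumes "x > -1"
  shows "(\<lambda>(j, n). den_coeff m j * ((-1) ^ n * pfrac_coeff j n * pfrac_basis x n))
           summable_on UNIV \<times> UNIV"
proof -
  obtain Cc where "Cc \<ge> 0" and Cc: "\<And>j. \<bar>den_coeff m j\<bar> \<le> Cc / (real j + 1)"
    by (rule den_coeff_le_inverse[of m]) blast
  obtain Cp where Cp: "\<And>n. \<bar>pfrac_basis x n\<bar> \<le> Cp * (real n + 1) powr (- 2 * (x + 1))"
    using pfrac_basis_bound[OF assms] by blast
  (* any \<theta> strictly between max 0 (- x) and 1 makes both exponents below -1 *)
  define \<theta> where "\<theta> = 1 - min (x + 1) 1 / 2"
  have \<theta>: "0 < \<theta>" "\<theta> < 1"
    using assms by (auto simp: \<theta>_def)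
  define K where "K = 2 * Cc * \<bar>Cp\<bar> * 8 powr \<theta>"
  define F where "F = (\<lambda>(j, n). den_coeff m j * ((-1) ^ n * pfrac_coeff j n * pfrac_basis x n))"
  define G where
    "G = (\<lambda>(j, n). (K * (real j + 1) powr (\<theta> - 2)) * (real n + 1) powr (1 - 2 * \<theta> - 2 * (x + 1)))"
  have "G summable_on UNIV \<times> UNIV"
    unfolding G_def
  proof (rule summable_on_product_nonneg)
    show "summable (\<lambda>j. K * (real j + 1) powr (\<theta> - 2))"
      using \<theta> by (intro summable_mult summable_Suc_powr) auto
    show "summable (\<lambda>n. (real n + 1) powr (1 - 2 * \<theta> - 2 * (x + 1)))"
      using assms by (intro summable_Suc_powr) (auto simp: \<theta>_def)
  qed (use \<open>Cc \<ge> 0\<close> in \<open>auto simp: K_def\<close>)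
  then have "(\<lambda>p. norm (F p)) summable_on UNIV \<times> UNIV"
  proof (rule Infinite_Sum.abs_summable_on_comparison_test')
    fix p :: "nat \<times> nat"
    obtain j n where p: "p = (j, n)"
      by (cases p)
    show "norm (F p) \<le> G p"
      using den_coeff_pfrac_term_bound[OF Cc \<open>Cc \<ge> 0\<close> Cp, of \<theta>] \<theta>
      by (simp add: p F_def G_def K_def mult_ac)
  qed
  then show ?thesis
    using summable_on_iff_abs_summable_on_real unfolding F_def by blast
qed

lemma den_coeff_pfrac_row_has_sum:
  assumes "x > -1"
  shows "((\<lambda>n. den_coeff m j * ((-1) ^ n * pfrac_coeff j n * pfrac_basis x n))
           has_sum (den_coeff m j / (x + real j + 1))) UNIV"
proof (rule has_sum_finite_neutralI[where B = "{..<Suc j}"])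
  show "den_coeff m j * ((-1) ^ n * pfrac_coeff j n * pfrac_basis x n) = 0"
    if "n \<in> UNIV - {..<Suc j}" for n
    using that by (simp add: pfrac_coeff_def pfrac_ratio_eq_0)
  have "(\<Sum>n<Suc j. den_coeff m j * ((-1) ^ n * pfrac_coeff j n * pfrac_basis x n))
          = den_coeff m j * (\<Sum>n<Suc j. (-1) ^ n * pfrac_coeff j n * pfrac_basis x n)"
    by (simp only: sum_distrib_left)
  also have "\<dots> = den_coeff m j / (x + real j + 1)"
    by (simp only: pfrac_expansion[OF assms]) simp
  finally show "den_coeff m j / (x + real j + 1)
                  = (\<Sum>n<Suc j. den_coeff m j * ((-1) ^ n * pfrac_coeff j n * pfrac_basis x n))"
    by (rule sym)
qed auto

lemma den_coeff_pfrac_column_has_sum: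
  "((\<lambda>j. den_coeff m j * ((-1) ^ n * pfrac_coeff j n * pfrac_basis x n))
     has_sum ((-1) ^ n * num_coeff m n * pfrac_basis x n * central_const m)) UNIV"
proof -
  have "((\<lambda>j. den_coeff m j * pfrac_coeff j n) has_sum (num_coeff m n * central_const m)) UNIV"
    using norm_summable_imp_has_sum[OF _ den_coeff_pfrac_coeff_sums] summable_abs_den_coeff_pfrac_coeff
    by simp
  then have "((\<lambda>j. ((-1) ^ n * pfrac_basis x n) * (den_coeff m j * pfrac_coeff j n))
               has_sum ((-1) ^ n * pfrac_basis x n) * (num_coeff m n * central_const m)) UNIV"
    by (rule has_sum_cmult_right)
  then show ?thesis
    by (simp add: mult_ac)
qed

lemma den_sum_sums:
  assumes "x > -1"
  shows "(\<lambda>j. den_coeff m j / (x + real j + 1)) sums den_sum m x"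
    and "(\<lambda>n. (-1) ^ n * num_coeff m n * pfrac_basis x n) sums (den_sum m x / central_const m)"
proof -
  define F where "F = (\<lambda>(j, n). den_coeff m j * ((-1) ^ n * pfrac_coeff j n * pfrac_basis x n))"
  define I where "I = infsum F (UNIV \<times> UNIV)"
  have FI: "(F has_sum I) (UNIV \<times> UNIV)"
    unfolding I_def F_def using summable_on_den_coeff_pfrac[OF assms] by (rule has_sum_infsum)
  have "((\<lambda>j. den_coeff m j / (x + real j + 1)) has_sum I) UNIV"
    by (rule has_sum_SigmaD[OF FI]) (use den_coeff_pfrac_row_has_sum[OF assms] in \<open>auto simp: F_def\<close>)
  then have rows: "(\<lambda>j. den_coeff m j / (x + real j + 1)) sums I"
    by (rule has_sum_imp_sums)
  then show "(\<lambda>j. den_coeff m j / (x + real j + 1)) sums den_sum m x"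
    by (simp add: den_sum_def sums_iff)
  have "((\<lambda>(n, j). F (j, n)) has_sum I) (UNIV \<times> UNIV)"
    using FI has_sum_swap by blast
  then have "((\<lambda>n. (-1) ^ n * num_coeff m n * pfrac_basis x n * central_const m) has_sum I) UNIV"
    by (rule has_sum_SigmaD) (use den_coeff_pfrac_column_has_sum in \<open>auto simp: F_def\<close>)
  then have "(\<lambda>n. (-1) ^ n * num_coeff m n * pfrac_basis x n * central_const m / central_const m)
               sums (I / central_const m)"
    by (intro sums_divide has_sum_imp_sums)
  moreover have "den_sum m x = I"
    using rows by (simp add: den_sum_def sums_iff)
  ultimately show "(\<lambda>n. (-1) ^ n * num_coeff m n * pfrac_basis x n) sums (den_sum m x / central_const m)"
    using central_const_pos[of m] by simp
qed
lemma den_sum_Suc_param: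
  assumes "x > -1"
  shows "(\<lambda>j. den_coeff (Suc m) j)
           sums ((x + real m + 3/2) * den_sum (Suc m) x - (real m + 1/2) * den_sum m x)"
proof -
  have "(x + real m + 3/2) * (den_coeff (Suc m) j / (x + real j + 1))
          - (real m + 1/2) * (den_coeff m j / (x + real j + 1)) = den_coeff (Suc m) j" for j
  proof -
    have "inverse (x + real j + 1) * (x + real j + 1) = 1"
      using assms by simp
    with den_coeff_Suc_param[of m j] show ?thesis
      unfolding divide_inverse by algebra
  qed
  moreover have "(\<lambda>j. (x + real m + 3/2) * (den_coeff (Suc m) j / (x + real j + 1))
                      - (real m + 1/2) * (den_coeff m j / (x + real j + 1)))
      sums ((x + real m + 3/2) * den_sum (Suc m) x - (real m + 1/2) * den_sum m x)"
    using assms by (intro sums_diff sums_mult den_sum_sums)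
  ultimately show ?thesis
    by simp
qed

lemma den_sum_pos:
  assumes "x > -1"
  shows "den_sum m x > 0"
proof (induction m)
  case 0
  have "summable (\<lambda>j. den_coeff 0 j / (x + real j + 1))"
    using den_sum_sums(1)[OF assms] by (rule sums_summable)
  moreover have "den_coeff 0 j / (x + real j + 1) > 0" for j
    using assms den_coeff_0_pos[of j] by simp
  ultimately show ?case
    unfolding den_sum_def by (rule suminf_pos)
next
  case (Suc m)
  have at_0: "den_sum k 0 = central_const k" for k
    using den_coeff_sums_central_const[of k] by (simp add: den_sum_def sums_iff add_ac)
  (* by den_sum_Suc_param the combination does not depend on x; evaluate it at x = 0 *)
  have "(x + real m + 3/2) * den_sum (Suc m) x - (real m + 1/2) * den_sum m x
          = (real m + 3/2) * den_sum (Suc m) 0 - (real m + 1/2) * den_sum m 0"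
    using sums_unique2[OF den_sum_Suc_param[OF assms] den_sum_Suc_param[of 0]] by simp
  also have "\<dots> = central_const m / 2"
    by (simp add: at_0 central_const_Suc field_simps)
  finally have "(x + real m + 3/2) * den_sum (Suc m) x = (real m + 1/2) * den_sum m x + central_const m / 2"
    by simp
  moreover have "(real m + 1/2) * den_sum m x + central_const m / 2 > 0"
    using Suc.IH central_const_pos[of m] by (simp add: add_pos_pos)
  moreover have "x + real m + 3/2 > 0"
    using assms by simp
  ultimately show ?case
    by (metis zero_less_mult_pos)
qed

section \<open>The two hypergeometric series\<close>

lemma hyperpFq_den_eq:
  assumes "x > -1"
  shows "hyperpFq [1/2 - real m, 1/2, 1 + x] [1, 2 + x] 1 = (1 + x) * den_sum m x"
proof -
  have summand: "prod_list (map (\<lambda>a. pochhammer a n) [1/2 - real m, 1/2, 1 + x])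
                / prod_list (map (\<lambda>b. pochhammer b n) [1, 2 + x]) * 1 ^ n / fact n
              = (1 + x) * (den_coeff m n / (x + real n + 1))" for n
  proof -
    have pos: "pochhammer (2 + x) n > 0" "x + real n + 1 > 0"
      using assms by (auto intro: pochhammer_pos)
    have "pochhammer (1 + x) n * (x + real n + 1) = (1 + x) * pochhammer (2 + x) n"
      using pochhammer_rec[of "1 + x" n] pochhammer_Suc[of "1 + x" n] by (simp add: add_ac)
    then have ratio: "pochhammer (1 + x) n / pochhammer (2 + x) n = (1 + x) / (x + real n + 1)"
      using pos by (simp add: field_simps)
    have "prod_list (map (\<lambda>a. pochhammer a n) [1/2 - real m, 1/2, 1 + x])
            / prod_list (map (\<lambda>b. pochhammer b n) [1, 2 + x]) * 1 ^ n / fact n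
          = den_coeff m n * (pochhammer (1 + x) n / pochhammer (2 + x) n)"
      using pos by (simp add: den_coeff_def pochhammer_fact power2_eq_square field_simps)
    then show ?thesis
      unfolding ratio by simp
  qed
  show ?thesis
    unfolding hyperpFq_def summand using sums_mult[OF den_sum_sums(1)[OF assms], of "1 + x"]
    by (simp add: sums_iff)
qed

lemma hyperpFq_num_eq:
  assumes "x > -1"
  shows "hyperpFq [1/2 - real m, 1, - x] [3/2 + real m, 2 + x] (-1)
           = (1 + x) * (den_sum m x / central_const m)"
proof -
  have summand: "prod_list (map (\<lambda>a. pochhammer a n) [1/2 - real m, 1, - x])
                / prod_list (map (\<lambda>b. pochhammer b n) [3/2 + real m, 2 + x]) * (-1) ^ n / fact n
              = (1 + x) * ((-1) ^ n * num_coeff m n * pfrac_basis x n)" for n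
  proof -
    have pos: "pochhammer (2 + x) n > 0" "pochhammer (3/2 + real m) n > 0" "1 + x > 0"
      using assms by (auto intro: pochhammer_pos)
    have "pochhammer (1 + x) (Suc n) = (1 + x) * pochhammer (2 + x) n"
      using pochhammer_rec[of "1 + x" n] by (simp add: add_ac)
    then have basis: "(1 + x) * pfrac_basis x n = pochhammer (- x) n / pochhammer (2 + x) n"
      using pos by (simp add: pfrac_basis_def)
    have "prod_list (map (\<lambda>a. pochhammer a n) [1/2 - real m, 1, - x])
            / prod_list (map (\<lambda>b. pochhammer b n) [3/2 + real m, 2 + x]) * (-1) ^ n / fact n
          = (-1) ^ n * num_coeff m n * (pochhammer (- x) n / pochhammer (2 + x) n)"
      using pos by (simp add: num_coeff_def pochhammer_fact[symmetric] field_simps)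
    then show ?thesis
      unfolding basis[symmetric] by (simp add: mult_ac)
  qed
  show ?thesis
    unfolding hyperpFq_def summand using sums_mult[OF den_sum_sums(2)[OF assms], of "1 + x"]
    by (simp add: sums_iff)
qed

theorem mainTheorem17:
  fixes m :: nat and \<eta> :: real
  assumes "\<eta> > -1"
  shows "pi = 4 ^ (m + 1) / (real (2 * m choose m) * (2 * real m + 1)) *
    (hyperpFq [1/2 - real m, 1, - \<eta>] [3/2 + real m, 2 + \<eta>] (-1)
     / hyperpFq [1/2 - real m, 1/2, 1 + \<eta>] [1, 2 + \<eta>] 1)"
proof -
  have "hyperpFq [1/2 - real m, 1, - \<eta>] [3/2 + real m, 2 + \<eta>] (-1)
          / hyperpFq [1/2 - real m, 1/2, 1 + \<eta>] [1, 2 + \<eta>] 1 = 1 / central_const m"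
    using den_sum_pos[OF assms, of m] assms
    by (simp add: hyperpFq_num_eq hyperpFq_den_eq[OF assms])
  then show ?thesis
    by (simp add: central_const_binomial)
qed

end
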